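(* There is a constant $C$ such that for all $u,v\in\mathbb{R}$, \[\int_0^\pi e^{-(u-v\cos s)^2}\frac{ds}{\pi}\le\frac{C}{\sqrt{(|u+v|+1)(|u-v|+1)}}.\] *)

theory Defs
  imports "HOL-Analysis.Analysis"
begin

end

theory Submission
  imports Defs
begin

text \<open>On \<open>[0, pi]\<close> the phase \<open>w(s) = u - v cos s\<close> runs monotonically from \<open>u - v\<close> to
  \<open>u + v\<close> with speed \<open>v sin s\<close>; the reflection \<open>s \<mapsto> pi - s\<close> swaps the two ends, so it suffices
  to treat \<open>[0, pi/2]\<close> with \<open>v \<ge> 0\<close>. If \<open>|w| \<ge> m\<close> on \<open>[s\<^sub>1, pi/2]\<close>, then
  \<open>exp (-w\<^sup>2) \<le> exp (-m\<^sup>2/2) * 2/(1 + w\<^sup>2)\<close> is at most \<open>2 exp (-m\<^sup>2/2) / (v sin s\<^sub>1)\<close> times the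
  derivative of \<open>arctan w\<close>, whose total increase is below \<open>pi\<close>; on \<open>[0, s\<^sub>1]\<close> the integrand is
  at most \<open>exp (-m\<^sup>2)\<close>. Taking \<open>s\<^sub>1 = 1/sqrt v\<close>, or \<open>s\<^sub>1 = sqrt ((v - u)/v)\<close> when \<open>w\<close> vanishes
  inside the interval, balances the two pieces against the weight
  \<open>(|u + v| + 1)(|u - v| + 1)\<close>.\<close>

lemma one_plus_mult_exp_neg_le: "(1 + t) * exp (- t) \<le> (1::real)"
  using exp_ge_add_one_self[of t] by (simp add: exp_minus field_simps)

lemma exp_neg_half_sq_le_inverse: "exp (- (y\<^sup>2) / 2) \<le> 2 / (1 + (y::real)\<^sup>2)"
proof -
  have "(1 + y\<^sup>2) * exp (- (y\<^sup>2) / 2) \<le> 2 * ((1 + y\<^sup>2 / 2) * exp (- (y\<^sup>2 / 2)))"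
    by (simp add: algebra_simps)
  also have "\<dots> \<le> 2" using one_plus_mult_exp_neg_le[of "y\<^sup>2 / 2"] by simp
  finally show ?thesis by (simp add: field_simps add_pos_nonneg)
qed

lemma exp_neg_half_sq_le_abs: "exp (- (y\<^sup>2) / 2) \<le> 2 / (1 + \<bar>y::real\<bar>)"
proof -
  have "2 * \<bar>y\<bar> \<le> 1 + y\<^sup>2"
    using zero_le_power2[of "\<bar>y\<bar> - 1"] by (simp add: power2_eq_square algebra_simps)
  then have "1 + \<bar>y\<bar> \<le> 2 * (1 + y\<^sup>2 / 2)" by simp
  then have "(1 + \<bar>y\<bar>) * exp (- (y\<^sup>2) / 2) \<le> 2 * ((1 + y\<^sup>2 / 2) * exp (- (y\<^sup>2 / 2)))"
    by (simp add: mult_right_mono)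
  also have "\<dots> \<le> 2" using one_plus_mult_exp_neg_le[of "y\<^sup>2 / 2"] by simp
  finally show ?thesis by (simp add: field_simps)
qed

lemma exp_neg_sq_le_abs: "exp (- (y\<^sup>2)) \<le> 2 / (1 + \<bar>y::real\<bar>)"
proof -
  have "exp (- (y\<^sup>2)) \<le> exp (- (y\<^sup>2) / 2)" by simp
  then show ?thesis using exp_neg_half_sq_le_abs[of y] by linarith
qed

lemma mult_exp_neg_sq_half_le_one: "b * exp (- ((b / 2)\<^sup>2)) \<le> (1::real)"
proof -
  have "b \<le> 1 + (b / 2)\<^sup>2"
    using zero_le_power2[of "b / 2 - 1"] by (simp add: power2_eq_square algebra_simps)
  then have "b * exp (- ((b / 2)\<^sup>2)) \<le> (1 + (b / 2)\<^sup>2) * exp (- ((b / 2)\<^sup>2))"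
    by (simp add: mult_right_mono)
  then show ?thesis using one_plus_mult_exp_neg_le[of "(b / 2)\<^sup>2"] by linarith
qed

lemma one_minus_cos_le: "1 - cos s \<le> (s::real)\<^sup>2 / 2"
proof -
  have "1 - cos s = 2 * (sin (s / 2))\<^sup>2"
    using cos_double_sin[of "s / 2"] by simp
  moreover have "(sin (s / 2))\<^sup>2 \<le> (s / 2)\<^sup>2"
    using abs_sin_x_le_abs_x[of "s / 2"] by (metis abs_ge_zero power2_abs power_mono)
  ultimately show ?thesis by (simp add: power_divide)
qed

lemma cos_ge_half: "\<bar>s::real\<bar> \<le> 1 \<Longrightarrow> 1 / 2 \<le> cos s"
  using one_minus_cos_le[of s] abs_square_le_1[of s] by simp

lemma sin_ge_half: assumes "0 \<le> (s::real)" "s \<le> 1" shows "s / 2 \<le> sin s"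
proof -
  have "\<And>x. ((\<lambda>x. sin x - x / 2) has_real_derivative cos x - 1 / 2) (at x)"
    by (auto intro!: derivative_eq_intros)
  moreover have "\<And>x. 0 \<le> x \<Longrightarrow> x \<le> s \<Longrightarrow> 0 \<le> cos x - 1 / 2"
    using cos_ge_half assms by fastforce
  ultimately have "sin 0 - 0 / 2 \<le> sin s - s / 2"
    by (intro DERIV_nonneg_imp_nondecreasing[OF assms(1)]) blast
  then show ?thesis by simp
qed

definition gauss_cos :: "real \<Rightarrow> real \<Rightarrow> real \<Rightarrow> real" where
  "gauss_cos u v s = exp (- (u - v * cos s)\<^sup>2)"

abbreviation endpoint_weight :: "real \<Rightarrow> real \<Rightarrow> real" where
  "endpoint_weight u v \<equiv> (\<bar>u + v\<bar> + 1) * (\<bar>u - v\<bar> + 1)"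

lemma endpoint_weight_pos: "0 < endpoint_weight u v"
  by (simp add: add_pos_nonneg)

lemma gauss_cos_integrable [simp]: "gauss_cos u v integrable_on {a..b}"
  unfolding gauss_cos_def by (intro integrable_continuous_real continuous_intros)

lemma gauss_cos_uminus: "gauss_cos (- u) (- v) = gauss_cos u v"
  by (simp add: gauss_cos_def fun_eq_iff power2_commute)

lemma integral_gauss_cos_le_length:
  assumes "a \<le> b" "0 \<le> m" "\<And>s. s \<in> {a..b} \<Longrightarrow> m \<le> \<bar>u - v * cos s\<bar>"
  shows "integral {a..b} (gauss_cos u v) \<le> (b - a) * exp (- (m\<^sup>2))"
proof -
  have "gauss_cos u v s \<le> exp (- (m\<^sup>2))" if "s \<in> {a..b}" for s
    using assms(3)[OF that] \<open>0 \<le> m\<close> unfolding gauss_cos_def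
    by (simp add: abs_le_square_iff[symmetric])
  then have "integral {a..b} (gauss_cos u v) \<le> integral {a..b} (\<lambda>_. exp (- (m\<^sup>2)))"
    by (intro integral_le) auto
  then show ?thesis using \<open>a \<le> b\<close> by simp
qed

lemma exp_neg_sq_le_arctan_density:
  fixes x m :: real
  assumes "0 \<le> m" "m \<le> \<bar>x\<bar>"
  shows "exp (- (x\<^sup>2)) \<le> exp (- (m\<^sup>2) / 2) * (2 / (1 + x\<^sup>2))"
proof -
  have "exp (- (x\<^sup>2)) = exp (- (x\<^sup>2) / 2) * exp (- (x\<^sup>2) / 2)"
    by (simp flip: exp_add)
  also have "\<dots> \<le> exp (- (m\<^sup>2) / 2) * (2 / (1 + x\<^sup>2))"
    using assms exp_neg_half_sq_le_inverse[of x]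
    by (intro mult_mono) (auto simp: abs_le_square_iff[symmetric])
  finally show ?thesis .
qed

lemma has_integral_arctan_phase:
  assumes "a \<le> b"
  shows "((\<lambda>s. v * sin s / (1 + (u - v * cos s)\<^sup>2)) has_integral
           arctan (u - v * cos b) - arctan (u - v * cos a)) {a..b}"
proof (rule fundamental_theorem_of_calculus[OF assms])
  fix s
  have "((\<lambda>s. arctan (u - v * cos s)) has_real_derivative
          v * sin s / (1 + (u - v * cos s)\<^sup>2)) (at s)"
    by (auto intro!: derivative_eq_intros simp: field_simps)
  then show "((\<lambda>s. arctan (u - v * cos s)) has_vector_derivative
          v * sin s / (1 + (u - v * cos s)\<^sup>2)) (at s within {a..b})"
    by (simp add: has_real_derivative_iff_has_vector_derivative has_vector_derivative_at_within)
qed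

lemma integral_gauss_cos_le_arctan:
  assumes "0 < v" "0 < a" "a \<le> b" "b \<le> pi / 2" "0 \<le> m"
    and m_le: "\<And>s. s \<in> {a..b} \<Longrightarrow> m \<le> \<bar>u - v * cos s\<bar>"
  shows "integral {a..b} (gauss_cos u v) \<le> 2 * pi * exp (- (m\<^sup>2) / 2) / (v * sin a)"
proof -
  define c where "c = 2 * exp (- (m\<^sup>2) / 2) / (v * sin a)"
  define g where "g s = v * sin s / (1 + (u - v * cos s)\<^sup>2)" for s
  have sin_a: "0 < sin a" using assms by (intro sin_gt_zero) auto
  have g_int: "(g has_integral arctan (u - v * cos b) - arctan (u - v * cos a)) {a..b}"
    unfolding g_def by (rule has_integral_arctan_phase[OF \<open>a \<le> b\<close>])
  have "gauss_cos u v s \<le> c * g s" if s: "s \<in> {a..b}" for s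
  proof -
    define x where "x = u - v * cos s"
    have "sin a \<le> sin s" using s assms by (intro sin_monotone_2pi_le) auto
    then have ratio: "1 \<le> v * sin s / (v * sin a)" using sin_a \<open>0 < v\<close> by simp
    have "gauss_cos u v s \<le> exp (- (m\<^sup>2) / 2) * (2 / (1 + x\<^sup>2))"
      unfolding gauss_cos_def x_def using \<open>0 \<le> m\<close> m_le[OF s]
      by (rule exp_neg_sq_le_arctan_density)
    also have "\<dots> \<le> exp (- (m\<^sup>2) / 2) * (2 / (1 + x\<^sup>2)) * (v * sin s / (v * sin a))"
      using mult_left_mono[OF ratio, of "exp (- (m\<^sup>2) / 2) * (2 / (1 + x\<^sup>2))"]
      by (simp add: add_pos_nonneg)
    also have "\<dots> = c * g s"
      using \<open>0 < v\<close> sin_a unfolding c_def g_def x_def[symmetric] by (simp add: divide_simps)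
    finally show ?thesis .
  qed
  then have "integral {a..b} (gauss_cos u v) \<le> integral {a..b} (\<lambda>s. c * g s)"
    using has_integral_integrable[OF g_int] by (intro integral_le integrable_on_mult_right) auto
  also have "\<dots> = c * (arctan (u - v * cos b) - arctan (u - v * cos a))"
    using integral_unique[OF g_int] by simp
  also have "\<dots> \<le> c * pi"
    using arctan_bounded[of "u - v * cos b"] arctan_bounded[of "u - v * cos a"]
      \<open>0 < v\<close> sin_a
    by (intro mult_left_mono) (auto simp: c_def)
  finally show ?thesis by (simp add: c_def mult_ac)
qed

lemma integral_half_gauss_cos_split:
  assumes "0 < v" "0 < s\<^sub>1" "s\<^sub>1 \<le> 1" "0 \<le> m\<^sub>1" "0 \<le> m\<^sub>2"
    and "\<And>s. s \<in> {0..s\<^sub>1} \<Longrightarrow> m\<^sub>1 \<le> \<bar>u - v * cos s\<bar>"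
    and "\<And>s. s \<in> {s\<^sub>1..pi / 2} \<Longrightarrow> m\<^sub>2 \<le> \<bar>u - v * cos s\<bar>"
  shows "integral {0..pi / 2} (gauss_cos u v)
           \<le> s\<^sub>1 * exp (- (m\<^sub>1\<^sup>2)) + 4 * pi * exp (- (m\<^sub>2\<^sup>2) / 2) / (v * s\<^sub>1)"
proof -
  have "s\<^sub>1 \<le> pi / 2" using assms pi_gt3 by linarith
  then have "integral {0..pi / 2} (gauss_cos u v)
      = integral {0..s\<^sub>1} (gauss_cos u v) + integral {s\<^sub>1..pi / 2} (gauss_cos u v)"
    using assms by (intro Henstock_Kurzweil_Integration.integral_combine[symmetric]) auto
  also have "integral {0..s\<^sub>1} (gauss_cos u v) \<le> s\<^sub>1 * exp (- (m\<^sub>1\<^sup>2))"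
    using integral_gauss_cos_le_length[of 0 s\<^sub>1 m\<^sub>1] assms by auto
  also have "integral {s\<^sub>1..pi / 2} (gauss_cos u v) \<le> 2 * pi * exp (- (m\<^sub>2\<^sup>2) / 2) / (v * sin s\<^sub>1)"
    using \<open>s\<^sub>1 \<le> pi / 2\<close> assms by (intro integral_gauss_cos_le_arctan) auto
  also have "\<dots> \<le> 2 * pi * exp (- (m\<^sub>2\<^sup>2) / 2) / (v * (s\<^sub>1 / 2))"
    using sin_ge_half[of s\<^sub>1] assms by (intro divide_left_mono mult_left_mono mult_pos_pos) auto
  finally show ?thesis by simp
qed

lemma le_div_sqrt_rescale:
  fixes X A Q P M C :: real
  assumes X: "X \<le> A / sqrt Q" and "0 < Q" "0 < P" and P: "P \<le> M\<^sup>2 * Q"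
    and "0 \<le> A" "0 \<le> M" "A * M \<le> C"
  shows "X \<le> C / sqrt P"
proof -
  have "sqrt P \<le> M * sqrt Q"
    using real_sqrt_le_mono[OF P] \<open>0 \<le> M\<close> by (simp add: real_sqrt_mult)
  then have "X * sqrt P \<le> A / sqrt Q * (M * sqrt Q)"
    using assms by (intro mult_mono) auto
  also have "\<dots> = A * M" using \<open>0 < Q\<close> by simp
  finally show ?thesis using assms by (simp add: pos_le_divide_eq)
qed

lemma integral_half_gauss_cos_small_v:
  assumes "0 \<le> v" "v < 1"
  shows "integral {0..pi / 2} (gauss_cos u v) \<le> 120 / sqrt (endpoint_weight u v)"
proof -
  define m where "m = max 0 (\<bar>u\<bar> - 1)"
  have "0 \<le> m" by (simp add: m_def)
  have "m \<le> \<bar>u - v * cos s\<bar>" for s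
  proof -
    have "\<bar>v * cos s\<bar> \<le> 1" using assms abs_cos_le_one[of s] by (simp add: abs_mult mult_le_one)
    then show ?thesis unfolding m_def by linarith
  qed
  then have "integral {0..pi / 2} (gauss_cos u v) \<le> pi / 2 * exp (- (m\<^sup>2))"
    using integral_gauss_cos_le_length[of 0 "pi / 2" m] \<open>0 \<le> m\<close> by simp
  also have "\<dots> \<le> pi / 2 * (2 / (1 + m))"
    using exp_neg_sq_le_abs[of m] \<open>0 \<le> m\<close> by (intro mult_left_mono) auto
  also have "\<dots> = pi / sqrt ((1 + m)\<^sup>2)" using \<open>0 \<le> m\<close> by simp
  finally have bound: "integral {0..pi / 2} (gauss_cos u v) \<le> pi / sqrt ((1 + m)\<^sup>2)" .
  have "\<bar>u + v\<bar> + 1 \<le> 3 * (1 + m)" "\<bar>u - v\<bar> + 1 \<le> 3 * (1 + m)"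
    using assms by (auto simp: m_def abs_if max_def)
  then have "endpoint_weight u v \<le> (3 * (1 + m)) * (3 * (1 + m))"
    by (intro mult_mono) auto
  also have "\<dots> = 3\<^sup>2 * (1 + m)\<^sup>2" by (simp add: power2_eq_square algebra_simps)
  finally have weight: "endpoint_weight u v \<le> 3\<^sup>2 * (1 + m)\<^sup>2" .
  show ?thesis
    by (rule le_div_sqrt_rescale[OF bound _ endpoint_weight_pos weight]) (use \<open>0 \<le> m\<close> pi_less_4 in auto)
qed

lemma integral_half_gauss_cos_right:
  assumes "1 \<le> v" "v - 1 \<le> u"
  shows "integral {0..pi / 2} (gauss_cos u v) \<le> 120 / sqrt (endpoint_weight u v)"
proof -
  define m where "m = max 0 (u - v)"
  have "0 \<le> m" by (simp add: m_def)
  have m_le: "m \<le> \<bar>u - v * cos s\<bar>" for s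
  proof -
    have "v * cos s \<le> v" using assms by (simp add: mult_left_le)
    then show ?thesis unfolding m_def by linarith
  qed
  have s\<^sub>1: "0 < 1 / sqrt v" "1 / sqrt v \<le> 1" using assms by auto
  have "integral {0..pi / 2} (gauss_cos u v)
      \<le> 1 / sqrt v * exp (- (m\<^sup>2)) + 4 * pi * exp (- (m\<^sup>2) / 2) / (v * (1 / sqrt v))"
    using assms \<open>0 \<le> m\<close> m_le by (intro integral_half_gauss_cos_split[OF _ s\<^sub>1]) auto
  also have "\<dots> \<le> (1 + 4 * pi) * exp (- (m\<^sup>2) / 2) / sqrt v"
    using assms by (simp add: real_div_sqrt add_divide_distrib distrib_right divide_right_mono)
  also have "\<dots> \<le> (1 + 4 * pi) * (2 / (1 + m)) / sqrt v"
    using exp_neg_half_sq_le_abs[of m] \<open>0 \<le> m\<close> pi_gt3 assms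
    by (intro divide_right_mono mult_left_mono) auto
  also have "\<dots> = 2 * (1 + 4 * pi) / sqrt (v * (1 + m)\<^sup>2)"
    using \<open>0 \<le> m\<close> by (simp add: real_sqrt_mult)
  finally have bound: "integral {0..pi / 2} (gauss_cos u v) \<le> \<dots>" .
  have "m \<le> v * m" using assms \<open>0 \<le> m\<close> by (simp add: mult_le_cancel_right1)
  then have "\<bar>u + v\<bar> + 1 \<le> 3 * v * (1 + m)"
    using assms by (auto simp: m_def algebra_simps)
  moreover have "\<bar>u - v\<bar> + 1 \<le> 2 * (1 + m)"
    using assms by (auto simp: m_def abs_if max_def)
  ultimately have "endpoint_weight u v \<le> (3 * v * (1 + m)) * (2 * (1 + m))"
    using assms by (intro mult_mono) auto
  also have "\<dots> \<le> 3\<^sup>2 * (v * (1 + m)\<^sup>2)"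
    using assms \<open>0 \<le> m\<close> by (simp add: power2_eq_square)
  finally have weight: "endpoint_weight u v \<le> 3\<^sup>2 * (v * (1 + m)\<^sup>2)" .
  show ?thesis
    by (rule le_div_sqrt_rescale[OF bound _ endpoint_weight_pos weight])
      (use assms \<open>0 \<le> m\<close> pi_less_4 in auto)
qed

lemma integral_half_gauss_cos_inside:
  assumes "1 \<le> v" "0 < u" "u < v - 1"
  shows "integral {0..pi / 2} (gauss_cos u v) \<le> 120 / sqrt (endpoint_weight u v)"
proof -
  define b where "b = v - u"
  have "1 < b" "b < v" using assms by (auto simp: b_def)
  define s\<^sub>1 where "s\<^sub>1 = sqrt (b / v)"
  have s\<^sub>1: "0 < s\<^sub>1" "s\<^sub>1 \<le> 1" using \<open>1 < b\<close> \<open>b < v\<close> by (auto simp: s\<^sub>1_def)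
  have vs\<^sub>1: "v * s\<^sub>1 = sqrt (b * v)" and s\<^sub>1_eq: "s\<^sub>1 = b / sqrt (b * v)"
    using \<open>1 < b\<close> \<open>b < v\<close>
    by (simp_all add: s\<^sub>1_def real_sqrt_mult real_sqrt_divide real_div_sqrt field_simps)
  have near: "b / 2 \<le> \<bar>u - v * cos s\<bar>" if "s \<in> {0..s\<^sub>1}" for s
  proof -
    have "s\<^sup>2 \<le> s\<^sub>1\<^sup>2" using that by (intro power_mono) auto
    then have "1 - cos s \<le> s\<^sub>1\<^sup>2 / 2" using one_minus_cos_le[of s] by linarith
    also have "\<dots> = b / v / 2" using \<open>1 < b\<close> \<open>b < v\<close> by (simp add: s\<^sub>1_def)
    finally have "v * (1 - cos s) \<le> b / 2"
      using \<open>b < v\<close> \<open>1 < b\<close> by (simp add: field_simps)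
    then have "v - v * cos s \<le> b / 2" by (simp add: right_diff_distrib)
    then have "u - v * cos s \<le> - (b / 2)" unfolding b_def by (simp add: field_simps)
    then show ?thesis by linarith
  qed
  have "integral {0..pi / 2} (gauss_cos u v)
      \<le> s\<^sub>1 * exp (- ((b / 2)\<^sup>2)) + 4 * pi * exp (- (0\<^sup>2) / 2) / (v * s\<^sub>1)"
    using near \<open>1 < b\<close> assms by (intro integral_half_gauss_cos_split[OF _ s\<^sub>1]) auto
  also have "\<dots> = (b * exp (- ((b / 2)\<^sup>2)) + 4 * pi) / sqrt (b * v)"
    unfolding vs\<^sub>1 by (simp add: s\<^sub>1_eq add_divide_distrib)
  also have "\<dots> \<le> (1 + 4 * pi) / sqrt (b * v)"
    using mult_exp_neg_sq_half_le_one[of b] \<open>1 < b\<close> \<open>b < v\<close>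
    by (intro divide_right_mono add_right_mono) auto
  finally have bound: "integral {0..pi / 2} (gauss_cos u v) \<le> \<dots>" .
  have "endpoint_weight u v \<le> (2 * v) * (2 * b)"
    using assms \<open>1 < b\<close> by (intro mult_mono) (auto simp: b_def)
  also have "\<dots> = 2\<^sup>2 * (b * v)" by simp
  finally have weight: "endpoint_weight u v \<le> 2\<^sup>2 * (b * v)" .
  show ?thesis
    by (rule le_div_sqrt_rescale[OF bound _ endpoint_weight_pos weight])
      (use \<open>1 < b\<close> \<open>b < v\<close> pi_less_4 in auto)
qed

lemma integral_half_gauss_cos_left_le:
  assumes "1 \<le> v" "u \<le> 0"
  shows "integral {0..pi / 2} (gauss_cos u v) \<le> (4 + 16 * pi) / (1 - u + v)"
proof -
  define T where "T = 1 - u + v"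
  define m where "m = v / 2 - u"
  have "0 \<le> m" "0 < T" using assms by (auto simp: m_def T_def)
  have near: "m \<le> \<bar>u - v * cos s\<bar>" if "s \<in> {0..1}" for s
  proof -
    have "v * (1 / 2) \<le> v * cos s"
      using cos_ge_half[of s] that assms by (intro mult_left_mono) auto
    then show ?thesis using \<open>0 \<le> m\<close> by (simp add: m_def)
  qed
  have far: "- u \<le> \<bar>u - v * cos s\<bar>" if "s \<in> {1..pi / 2}" for s
  proof -
    have "0 \<le> v * cos s" using cos_ge_zero[of s] that assms by auto
    then show ?thesis using assms by linarith
  qed
  have "integral {0..pi / 2} (gauss_cos u v)
      \<le> 1 * exp (- (m\<^sup>2)) + 4 * pi * exp (- ((- u)\<^sup>2) / 2) / (v * 1)"
    using near far \<open>0 \<le> m\<close> assms by (intro integral_half_gauss_cos_split) auto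
  also have "\<dots> \<le> 4 / T + 16 * pi / T"
  proof (rule add_mono)
    have "exp (- (m\<^sup>2)) \<le> 2 / (1 + m)" using exp_neg_sq_le_abs[of m] \<open>0 \<le> m\<close> by simp
    also have "\<dots> = 4 / (2 * (1 + m))" using \<open>0 \<le> m\<close> by (simp add: field_simps)
    also have "\<dots> \<le> 4 / T"
      using \<open>0 \<le> m\<close> \<open>0 < T\<close> assms
      by (intro divide_left_mono mult_pos_pos) (auto simp: m_def T_def)
    finally show "1 * exp (- (m\<^sup>2)) \<le> 4 / T" by simp
  next
    have "0 \<le> - u * (2 * v - 1)" using assms by (intro mult_nonneg_nonneg) auto
    then have T_le: "T \<le> 2 * ((1 - u) * v)" using assms by (simp add: T_def algebra_simps)
    have "exp (- ((- u)\<^sup>2) / 2) \<le> 2 / (1 - u)"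
      using exp_neg_half_sq_le_abs[of u] assms by simp
    then have "4 * pi * exp (- ((- u)\<^sup>2) / 2) / v \<le> 4 * pi * (2 / (1 - u)) / v"
      using assms by (intro divide_right_mono mult_left_mono) auto
    also have "\<dots> = 16 * pi / (2 * ((1 - u) * v))" using assms by simp
    also have "\<dots> \<le> 16 * pi / T"
      using T_le \<open>0 < T\<close> assms
      by (intro divide_left_mono mult_pos_pos) auto
    finally show "4 * pi * exp (- ((- u)\<^sup>2) / 2) / (v * 1) \<le> 16 * pi / T" by simp
  qed
  finally show ?thesis by (simp add: T_def add_divide_distrib)
qed

lemma integral_half_gauss_cos_left:
  assumes "1 \<le> v" "u \<le> 0"
  shows "integral {0..pi / 2} (gauss_cos u v) \<le> 120 / sqrt (endpoint_weight u v)"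
proof -
  define T where "T = 1 - u + v"
  have "0 < T" using assms by (simp add: T_def)
  then have bound: "integral {0..pi / 2} (gauss_cos u v) \<le> (4 + 16 * pi) / sqrt (T\<^sup>2)"
    using integral_half_gauss_cos_left_le[OF assms] by (simp add: T_def)
  have "endpoint_weight u v \<le> T * T"
    using assms by (intro mult_mono) (auto simp: T_def)
  then have weight: "endpoint_weight u v \<le> 1\<^sup>2 * T\<^sup>2" by (simp add: power2_eq_square)
  show ?thesis
    by (rule le_div_sqrt_rescale[OF bound _ endpoint_weight_pos weight])
      (use \<open>0 < T\<close> pi_less_4 in auto)
qed

lemma integral_half_gauss_cos_le_of_nonneg:
  assumes "0 \<le> v"
  shows "integral {0..pi / 2} (gauss_cos u v) \<le> 120 / sqrt (endpoint_weight u v)"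
proof -
  consider "v < 1" | "1 \<le> v" "u \<le> 0" | "1 \<le> v" "0 < u" "u < v - 1" | "1 \<le> v" "v - 1 \<le> u"
    by linarith
  then show ?thesis
    using assms
    by cases (blast intro: integral_half_gauss_cos_small_v integral_half_gauss_cos_left
        integral_half_gauss_cos_inside integral_half_gauss_cos_right)+
qed

lemma integral_half_gauss_cos_le:
  "integral {0..pi / 2} (gauss_cos u v) \<le> 120 / sqrt (endpoint_weight u v)"
proof (cases "0 \<le> v")
  case False
  then show ?thesis
    using integral_half_gauss_cos_le_of_nonneg[of "- v" "- u"]
    by (simp add: gauss_cos_uminus abs_minus_commute add.commute)
qed (rule integral_half_gauss_cos_le_of_nonneg)

lemma integral_gauss_cos_reflect:
  "integral {pi / 2..pi} (gauss_cos u v) = integral {0..pi / 2} (gauss_cos u (- v))"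
proof -
  have "integral {0..pi / 2} (gauss_cos u (- v))
      = integral {0..pi / 2} ((\<lambda>x. gauss_cos u v (- x)) \<circ> (+) (- pi))"
    by (simp add: gauss_cos_def[abs_def] o_def)
  also have "\<dots> = integral {- pi..- (pi / 2)} (\<lambda>x. gauss_cos u v (- x))"
    by (simp add: integral_shift_Icc_real)
  also have "\<dots> = integral {pi / 2..pi} (gauss_cos u v)"
    by (rule Henstock_Kurzweil_Integration.integral_reflect_real)
  finally show ?thesis ..
qed

lemma integral_gauss_cos_le:
  "integral {0..pi} (gauss_cos u v) \<le> 240 / sqrt (endpoint_weight u v)"
proof -
  have "integral {0..pi} (gauss_cos u v)
      = integral {0..pi / 2} (gauss_cos u v) + integral {pi / 2..pi} (gauss_cos u v)"
    by (intro Henstock_Kurzweil_Integration.integral_combine[symmetric]) auto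
  also have "\<dots> = integral {0..pi / 2} (gauss_cos u v) + integral {0..pi / 2} (gauss_cos u (- v))"
    by (simp add: integral_gauss_cos_reflect)
  also have "\<dots> \<le> 120 / sqrt (endpoint_weight u v) + 120 / sqrt (endpoint_weight u (- v))"
    by (intro add_mono integral_half_gauss_cos_le)
  also have "endpoint_weight u (- v) = endpoint_weight u v"
    by (simp add: mult.commute)
  finally show ?thesis by simp
qed

theorem lemmaA4:
  shows "\<exists>C::real. \<forall>u v :: real.
    integral {0..pi} (\<lambda>s. exp (- (u - v * cos s)\<^sup>2) / pi)
      \<le> C / sqrt ((\<bar>u + v\<bar> + 1) * (\<bar>u - v\<bar> + 1))"
proof (intro exI allI)
  fix u v :: real
  have integrand: "(\<lambda>s. exp (- (u - v * cos s)\<^sup>2)) = gauss_cos u v"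
    by (simp add: gauss_cos_def fun_eq_iff)
  have "0 \<le> integral {0..pi} (gauss_cos u v)"
    by (intro integral_nonneg) (auto simp: gauss_cos_def)
  then have "integral {0..pi} (gauss_cos u v) / pi \<le> integral {0..pi} (gauss_cos u v) / 1"
    using pi_gt3 by (intro divide_left_mono) auto
  with integral_gauss_cos_le[of u v]
  show "integral {0..pi} (\<lambda>s. exp (- (u - v * cos s)\<^sup>2) / pi)
      \<le> 240 / sqrt ((\<bar>u + v\<bar> + 1) * (\<bar>u - v\<bar> + 1))"
    by (simp add: integrand)
qed

end
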